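(* Let $\beta\in[0,\tfrac12)$ and let $u,v:\mathbb{T}_m\to\mathbb{R}$ be bounded functions such that $-\Delta_\beta u(x)\ge-\Delta_\beta v(x)$ for all $x\in\mathbb{T}_m$ and $\liminf_{x\to y}u(x)\ge\limsup_{x\to y}v(x)$ for every $y\in\partial\mathbb{T}_m$. Then $u\ge v$ on $\mathbb{T}_m$. Moreover, if $\beta>0$, then either $u>v$ on $\mathbb{T}_m$ or $u\equiv v$.
   Context: Tree: for an integer $m\ge2$, $\mathbb{T}_m$ has vertices the root $\emptyset$ and all finite sequences $(\emptyset,a_1,\dots,a_k)$, $a_i\in\{0,\dots,m-1\}$; $|x|$ is the level, successors of $x$ are $(x,i)$, $\hat x$ is the immediate predecessor of $x\ne\emptyset$. A branch is an infinite sequence $(x_n)_{n\ge0}$ with $x_0=\emptyset$ and $x_{n+1}$ a successor of $x_n$; $\partial\mathbb{T}_m$ is the set of branches; for $y=(x_n)$, $\liminf_{x\to y}u(x)=\liminf_n u(x_n)$ and $\limsup_{x\to y}v(x)=\limsup_n v(x_n)$. Operator: $p_\beta=1$ if $\beta=0$, $p_\beta=\beta/(1-\beta)$ if $\beta\in(0,1)$. $\Delta_\beta u(\emptyset)=\frac1m\sum_{i=0}^{m-1}u(\emptyset,i)-u(\emptyset)$ and, for $x\ne\emptyset$, $\Delta_\beta u(x)=\big(\beta u(\hat x)+\frac{1-\beta}{m}\sum_{i=0}^{m-1}u(x,i)-u(x)\big)p_\beta^{-|x|}$. *)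

theory Defs
  imports "HOL-Analysis.Analysis" "HOL-Library.Liminf_Limsup"
begin

text \<open>Vertices of the m-ary tree: the sequence (root, a1, ..., ak) is represented by the
 list [a1,...,ak] with all entries < m. The root is [], the successor (x,i) is x @ [i],
 the predecessor of x is butlast x and the level |x| is length x.\<close>

definition tree_vertices :: "nat \<Rightarrow> nat list set" where
  "tree_vertices m = {x. \<forall>a\<in>set x. a < m}"

definition is_branch :: "nat \<Rightarrow> (nat \<Rightarrow> nat list) \<Rightarrow> bool" where
  "is_branch m xs \<longleftrightarrow> xs 0 = [] \<and> (\<forall>n. \<exists>i<m. xs (Suc n) = xs n @ [i])"

definition p_beta :: "real \<Rightarrow> real" where
  "p_beta \<beta> = (if \<beta> = 0 then 1 else \<beta> / (1 - \<beta>))"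

definition tree_lap :: "nat \<Rightarrow> real \<Rightarrow> (nat list \<Rightarrow> real) \<Rightarrow> nat list \<Rightarrow> real" where
  "tree_lap m \<beta> u x =
    (if x = [] then (1 / real m) * (\<Sum>i<m. u [i]) - u []
     else (\<beta> * u (butlast x) + ((1 - \<beta>) / real m) * (\<Sum>i<m. u (x @ [i])) - u x)
          * (inverse (p_beta \<beta>)) ^ length x)"

definition bounded_on_tree :: "nat \<Rightarrow> (nat list \<Rightarrow> real) \<Rightarrow> bool" where
  "bounded_on_tree m u \<longleftrightarrow> (\<exists>C. \<forall>x\<in>tree_vertices m. \<bar>u x\<bar> \<le> C)"

end

theory Submission
  imports Defs
begin

text \<open>The difference \<open>w = v - u\<close> satisfies \<open>\<Delta>\<^sub>\<beta> w \<ge> 0\<close>, and at every vertex \<open>w\<close> is then dominated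
  by a weighted mean of its parent and its children. Starting at a vertex whose value is not
  below its parent's, one can therefore always step to a child of no smaller value, producing a
  branch along which \<open>w\<close> never decreases. If \<open>w\<close> were positive somewhere, this branch would
  keep \<open>v - u\<close> above a positive constant, contradicting the boundary condition. For
  \<open>\<beta> > 0\<close> the parent carries positive weight, so a zero of \<open>w \<le> 0\<close> spreads to the parent and
  to all children, hence through the whole tree.\<close>

definition tree_subharmonic :: "nat \<Rightarrow> real \<Rightarrow> (nat list \<Rightarrow> real) \<Rightarrow> bool" where
  "tree_subharmonic m \<beta> w \<longleftrightarrow> (\<forall>x\<in>tree_vertices m. tree_lap m \<beta> w x \<ge> 0)"

lemma tree_vertices_Nil [simp]: "[] \<in> tree_vertices m"
  by (simp add: tree_vertices_def)

lemma tree_vertices_snoc [simp]: "x @ [i] \<in> tree_vertices m \<longleftrightarrow> x \<in> tree_vertices m \<and> i < m"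
  by (auto simp: tree_vertices_def)

lemma butlast_in_tree_vertices: "x \<in> tree_vertices m \<Longrightarrow> butlast x \<in> tree_vertices m"
  by (auto simp: tree_vertices_def dest: in_set_butlastD)

lemma is_branch_in_tree_vertices:
  assumes "is_branch m xs"
  shows "xs n \<in> tree_vertices m"
proof (induction n)
  case 0
  then show ?case using assms by (simp add: is_branch_def)
next
  case (Suc n)
  then show ?case using assms unfolding is_branch_def by (metis tree_vertices_snoc)
qed

lemma p_beta_pos: "0 \<le> \<beta> \<Longrightarrow> \<beta> < 1 \<Longrightarrow> p_beta \<beta> > 0"
  by (auto simp: p_beta_def)

lemma tree_lap_diff:
  "tree_lap m \<beta> (\<lambda>x. v x - u x) x = tree_lap m \<beta> v x - tree_lap m \<beta> u x"
  by (simp add: tree_lap_def sum_subtractf algebra_simps)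

lemma tree_lap_Nil_nonneg_iff:
  assumes "m > 0"
  shows "tree_lap m \<beta> w [] \<ge> 0 \<longleftrightarrow> real m * w [] \<le> (\<Sum>i<m. w [i])"
  using assms by (simp add: tree_lap_def field_simps)

lemma tree_lap_nonneg_iff:
  assumes "x \<noteq> []" "0 \<le> \<beta>" "\<beta> < 1"
  shows "tree_lap m \<beta> w x \<ge> 0 \<longleftrightarrow>
         w x \<le> \<beta> * w (butlast x) + ((1 - \<beta>) / real m) * (\<Sum>i<m. w (x @ [i]))"
proof -
  have "inverse (p_beta \<beta>) ^ length x > 0"
    using p_beta_pos[OF assms(2,3)] by simp
  then show ?thesis
    using assms(1) by (simp add: tree_lap_def zero_le_mult_iff)
qed

lemma exists_ge_average:
  fixes f :: "nat \<Rightarrow> real"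
  assumes "m > 0" "real m * a \<le> (\<Sum>i<m. f i)"
  shows "\<exists>i<m. a \<le> f i"
proof (rule ccontr)
  assume "\<not> ?thesis"
  then have "(\<Sum>i<m. f i) < (\<Sum>i<m. a)"
    using assms(1) by (intro sum_strict_mono) auto
  then show False
    using assms(2) by simp
qed

lemma tree_subharmonic_exists_child_ge:
  assumes "tree_subharmonic m \<beta> w" "m > 0" "0 \<le> \<beta>" "\<beta> < 1"
    and x: "x \<in> tree_vertices m" "x \<noteq> [] \<longrightarrow> w (butlast x) \<le> w x"
  shows "\<exists>i<m. w x \<le> w (x @ [i])"
proof (rule exists_ge_average[OF \<open>m > 0\<close>])
  let ?s = "\<Sum>i<m. w (x @ [i])"
  have lap: "tree_lap m \<beta> w x \<ge> 0"
    using assms(1) x(1) by (simp add: tree_subharmonic_def)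
  show "real m * w x \<le> ?s"
  proof (cases "x = []")
    case True
    then show ?thesis
      using lap tree_lap_Nil_nonneg_iff[OF \<open>m > 0\<close>] by simp
  next
    case False
    have "w x \<le> \<beta> * w (butlast x) + ((1 - \<beta>) / real m) * ?s"
      using lap tree_lap_nonneg_iff[OF False assms(3,4)] by simp
    also have "\<dots> \<le> \<beta> * w x + ((1 - \<beta>) / real m) * ?s"
      using x(2) False assms(3) by (simp add: mult_left_mono)
    finally have "(1 - \<beta>) * w x \<le> (1 - \<beta>) * (?s / real m)"
      by (simp add: algebra_simps)
    then have "w x \<le> ?s / real m"
      using assms(4) by (simp add: mult_left_le_imp_le)
    then show ?thesis
      using \<open>m > 0\<close> by (simp add: field_simps)
  qed
qed

lemma exists_ge_parent:
  fixes w :: "nat list \<Rightarrow> 'a::linorder"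
  assumes "x \<in> tree_vertices m"
  shows "\<exists>y\<in>tree_vertices m. w x \<le> w y \<and> (y \<noteq> [] \<longrightarrow> w (butlast y) \<le> w y)"
  using assms
proof (induction x rule: rev_induct)
  case Nil
  show ?case by (rule bexI[of _ "[]"]) auto
next
  case (snoc a x)
  show ?case
  proof (cases "w x \<le> w (x @ [a])")
    case True
    then show ?thesis using snoc.prems by force
  next
    case False
    obtain y where "y \<in> tree_vertices m" "w x \<le> w y" "y \<noteq> [] \<longrightarrow> w (butlast y) \<le> w y"
      using snoc by auto
    moreover have "w (x @ [a]) \<le> w x"
      using False linear by blast
    ultimately show ?thesis
      by (intro bexI[of _ y]) (auto intro: order.trans)
  qed
qed

lemma exists_branch_eventually:
  assumes step: "\<And>z. P z \<Longrightarrow> \<exists>i<m. P (z @ [i])"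
    and y: "y \<in> tree_vertices m" "P y"
  shows "\<exists>xs. is_branch m xs \<and> (\<forall>n\<ge>length y. P (xs n))"
proof -
  define c where "c z = z @ [SOME i. i < m \<and> P (z @ [i])]" for z
  have c: "\<exists>i<m. c z = z @ [i]" "P (c z)" if "P z" for z
    using someI_ex[OF step[OF that, unfolded Bex_def]] by (auto simp: c_def)
  define xs where "xs n = (if n < length y then take n y else (c ^^ (n - length y)) y)" for n
  have prefix: "xs n = take n y" if "n \<le> length y" for n
    using that by (cases "n = length y") (simp_all add: xs_def)
  have tail: "P (xs n)" if "n \<ge> length y" for n
    using that
  proof (induction n rule: dec_induct)
    case base
    then show ?case using y(2) by (simp add: xs_def)
  next
    case (step n)
    then show ?case using c(2) by (simp add: xs_def Suc_diff_le)
  qed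
  have "is_branch m xs"
    unfolding is_branch_def
  proof (intro conjI allI)
    show "xs 0 = []" by (simp add: xs_def)
    fix n
    show "\<exists>i<m. xs (Suc n) = xs n @ [i]"
    proof (cases "n < length y")
      case True
      then have "y ! n < m" using y(1) by (simp add: tree_vertices_def)
      then show ?thesis using True prefix[of n] prefix[of "Suc n"] by (auto simp: take_Suc_conv_app_nth)
    next
      case False
      then have "xs (Suc n) = c (xs n)" by (simp add: xs_def Suc_diff_le)
      then show ?thesis using c(1) tail False by simp
    qed
  qed
  then show ?thesis using tail by blast
qed

lemma tree_subharmonic_branch_ge:
  assumes "tree_subharmonic m \<beta> w" "m > 0" "0 \<le> \<beta>" "\<beta> < 1" "x \<in> tree_vertices m"
  shows "\<exists>xs. is_branch m xs \<and> (\<forall>\<^sub>F n in sequentially. w x \<le> w (xs n))"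
proof -
  obtain y where y: "y \<in> tree_vertices m" "w x \<le> w y" "y \<noteq> [] \<longrightarrow> w (butlast y) \<le> w y"
    using exists_ge_parent[OF assms(5)] by blast
  define P where "P z \<longleftrightarrow> z \<in> tree_vertices m \<and> w y \<le> w z \<and> (z \<noteq> [] \<longrightarrow> w (butlast z) \<le> w z)"
    for z
  have "\<exists>i<m. P (z @ [i])" if "P z" for z
    using tree_subharmonic_exists_child_ge[OF assms(1-4), of z] that by (force simp: P_def)
  then obtain xs where "is_branch m xs" "\<forall>n\<ge>length y. P (xs n)"
    using exists_branch_eventually[of P m y] y by (auto simp: P_def)
  then show ?thesis
    using y(2) by (force simp: P_def eventually_sequentially)
qed

lemma not_limsup_le_liminf_if_gap:
  fixes f g :: "nat \<Rightarrow> real"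
  assumes bounded: "\<And>n. \<bar>f n\<bar> \<le> C"
    and gap: "\<forall>\<^sub>F n in sequentially. f n + d \<le> g n" and "d > 0"
  shows "\<not> limsup (\<lambda>n. ereal (g n)) \<le> liminf (\<lambda>n. ereal (f n))"
proof
  assume le: "limsup (\<lambda>n. ereal (g n)) \<le> liminf (\<lambda>n. ereal (f n))"
  let ?L = "liminf (\<lambda>n. ereal (f n))"
  have "- C \<le> f n" for n
    using bounded[of n] by simp
  then have "ereal (- C) \<le> ?L"
    by (intro Liminf_bounded always_eventually allI) simp
  moreover have "?L \<le> ereal C"
    using bounded Liminf_le_Limsup[of sequentially "\<lambda>n. ereal (f n)"]
      Limsup_bounded[of "\<lambda>n. ereal (f n)" "ereal C" sequentially]
    by (simp add: abs_le_iff)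
  ultimately obtain l where l: "?L = ereal l"
    by (cases ?L) auto
  have "?L + ereal d = liminf (\<lambda>n. ereal (f n) + ereal d)"
    by (rule Liminf_add_ereal_right[symmetric]) auto
  also have "\<dots> \<le> liminf (\<lambda>n. ereal (g n))"
    using gap by (intro Liminf_mono) (auto elim!: eventually_mono)
  also have "\<dots> \<le> limsup (\<lambda>n. ereal (g n))"
    by (rule Liminf_le_Limsup) simp
  also have "\<dots> \<le> ?L"
    by (rule le)
  finally show False
    using l \<open>d > 0\<close> by simp
qed

lemma tree_subharmonic_nonpos_zero_neighbours:
  assumes "tree_subharmonic m \<beta> w" "m > 0" "0 < \<beta>" "\<beta> < 1"
    and nonpos: "\<forall>x\<in>tree_vertices m. w x \<le> 0"
    and x: "x \<in> tree_vertices m" "w x = 0"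
  shows "\<forall>i<m. w (x @ [i]) = 0" and "x \<noteq> [] \<longrightarrow> w (butlast x) = 0"
proof -
  let ?s = "\<Sum>i<m. w (x @ [i])"
  have children: "\<forall>i\<in>{..<m}. w (x @ [i]) \<le> 0"
    using nonpos x(1) by simp
  then have s: "?s \<le> 0"
    by (intro sum_nonpos) auto
  have lap: "tree_lap m \<beta> w x \<ge> 0"
    using assms(1) x(1) by (simp add: tree_subharmonic_def)
  have zero: "?s = 0 \<and> (x \<noteq> [] \<longrightarrow> w (butlast x) = 0)"
  proof (cases "x = []")
    case True
    then show ?thesis
      using lap tree_lap_Nil_nonneg_iff[OF \<open>m > 0\<close>] x(2) s by simp
  next
    case False
    have parent: "w (butlast x) \<le> 0"
      using nonpos butlast_in_tree_vertices[OF x(1)] by simp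
    have "0 \<le> \<beta> * w (butlast x) + ((1 - \<beta>) / real m) * ?s"
      using lap tree_lap_nonneg_iff[OF False less_imp_le[OF assms(3)] assms(4)] x(2) by simp
    moreover have "\<beta> * w (butlast x) \<le> 0"
      using parent assms(3) by (simp add: mult_nonneg_nonpos)
    moreover have "((1 - \<beta>) / real m) * ?s \<le> 0"
      using s assms(2,4) by (simp add: mult_nonneg_nonpos divide_nonpos_nonneg)
    ultimately have "\<beta> * w (butlast x) = 0" "((1 - \<beta>) / real m) * ?s = 0"
      by linarith+
    then show ?thesis
      using False assms(2-4) by simp
  qed
  have "(\<Sum>i<m. - w (x @ [i])) = 0"
    using zero by (simp add: sum_negf)
  then show "\<forall>i<m. w (x @ [i]) = 0"
    using children sum_nonneg_eq_0_iff[of "{..<m}" "\<lambda>i. - w (x @ [i])"] by auto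
  show "x \<noteq> [] \<longrightarrow> w (butlast x) = 0"
    using zero by simp
qed

lemma tree_subharmonic_nonpos_zero_everywhere:
  assumes "tree_subharmonic m \<beta> w" "m > 0" "0 < \<beta>" "\<beta> < 1"
    and nonpos: "\<forall>x\<in>tree_vertices m. w x \<le> 0"
    and x0: "x0 \<in> tree_vertices m" "w x0 = 0"
  shows "\<forall>x\<in>tree_vertices m. w x = 0"
proof -
  note neighbours = tree_subharmonic_nonpos_zero_neighbours[OF assms(1-5)]
  have root: "w [] = 0"
    using x0
  proof (induction x0 rule: rev_induct)
    case Nil
    then show ?case by simp
  next
    case (snoc a x)
    then show ?case using neighbours(2)[OF snoc.prems] by simp
  qed
  show ?thesis
  proof
    fix x
    assume "x \<in> tree_vertices m"
    then show "w x = 0"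
    proof (induction x rule: rev_induct)
      case Nil
      then show ?case using root by simp
    next
      case (snoc a x)
      then show ?case using neighbours(1)[of x] by simp
    qed
  qed
qed

theorem theorem2p2:
  fixes m :: nat and \<beta> :: real and u v :: "nat list \<Rightarrow> real"
  assumes "m \<ge> 2"
    and "0 \<le> \<beta>" and "\<beta> < 1/2"
    and "bounded_on_tree m u" and "bounded_on_tree m v"
    and "\<forall>x\<in>tree_vertices m. - tree_lap m \<beta> u x \<ge> - tree_lap m \<beta> v x"
    and "\<forall>xs. is_branch m xs \<longrightarrow>
           liminf (\<lambda>n. ereal (u (xs n))) \<ge> limsup (\<lambda>n. ereal (v (xs n)))"
  shows "(\<forall>x\<in>tree_vertices m. u x \<ge> v x) \<and>
         (\<beta> > 0 \<longrightarrow> (\<forall>x\<in>tree_vertices m. u x > v x) \<or> (\<forall>x\<in>tree_vertices m. u x = v x))"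
proof -
  define w where "w x = v x - u x" for x
  have m: "m > 0" and \<beta>: "\<beta> < 1"
    using assms(1,3) by auto
  have sub: "tree_subharmonic m \<beta> w"
    using assms(6) by (simp add: tree_subharmonic_def w_def[abs_def] tree_lap_diff)
  \<comment> \<open>Only \<open>u\<close> needs to be bounded: this keeps its liminf along a branch finite.\<close>
  obtain C where C: "\<forall>x\<in>tree_vertices m. \<bar>u x\<bar> \<le> C"
    using assms(4) by (auto simp: bounded_on_tree_def)
  have nonpos: "\<forall>x\<in>tree_vertices m. w x \<le> 0"
  proof (rule ccontr)
    assume "\<not> ?thesis"
    then obtain x where x: "x \<in> tree_vertices m" "w x > 0"
      by force
    then obtain xs where xs: "is_branch m xs" "\<forall>\<^sub>F n in sequentially. w x \<le> w (xs n)"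
      using tree_subharmonic_branch_ge[OF sub m assms(2) \<beta>] by blast
    have "\<forall>\<^sub>F n in sequentially. u (xs n) + w x \<le> v (xs n)"
      using xs(2) by (rule eventually_mono) (simp add: w_def)
    then have "\<not> limsup (\<lambda>n. ereal (v (xs n))) \<le> liminf (\<lambda>n. ereal (u (xs n)))"
      using C is_branch_in_tree_vertices[OF xs(1)] x(2)
      by (intro not_limsup_le_liminf_if_gap[where C = C]) auto
    then show False
      using assms(7) xs(1) by blast
  qed
  have "(\<forall>x\<in>tree_vertices m. u x > v x) \<or> (\<forall>x\<in>tree_vertices m. u x = v x)" if "\<beta> > 0"
  proof (cases "\<forall>x\<in>tree_vertices m. w x < 0")
    case False
    then obtain x0 where "x0 \<in> tree_vertices m" "w x0 = 0"
      using nonpos by (auto simp: not_less)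
    then have "\<forall>x\<in>tree_vertices m. w x = 0"
      by (rule tree_subharmonic_nonpos_zero_everywhere[OF sub m that \<beta> nonpos])
    then show ?thesis by (simp add: w_def)
  qed (simp add: w_def)
  then show ?thesis
    using nonpos by (auto simp: w_def)
qed

end
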